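(* Let $A$ and $B$ be real symmetric matrices such that $A\in\mathcal{S}(G_A)$ has the strong spectral property with respect to $H_A$ and $B\in\mathcal{S}(G_B)$ has the strong spectral property with respect to $H_B$, where $G_A$ is a spanning subgraph of $H_A$ and $G_B$ is a spanning subgraph of $H_B$. If $A$ and $B$ have no common eigenvalues, then $A\oplus B$ has the strong spectral property with respect to the disjoint union $H_A\oplus H_B$.
   Context: For a graph $G$ on $\{1,\ldots,n\}$, $\mathcal{S}(G)$ is the set of $n\times n$ real symmetric matrices $A=(a_{ij})$ with, for $i\neq j$, $a_{ij}\neq0$ iff $\{i,j\}\in E(G)$; $\mathcal{S}^{\rm cl}(G)$ is the set of $n\times n$ real symmetric matrices whose $(i,j)$-entry, $i\neq j$, is nonzero only if $\{i,j\}\in E(G)$. $\overline{H}$ is the complement of $H$. If $A\in\mathcal{S}(G)$ and $H$ is a graph on the same vertex set with $E(G)\subseteq E(H)$, then $A$ has the strong spectral property with respect to $H$ if the only real symmetric $X$ with $X\in\mathcal{S}^{\rm cl}(\overline{H})$, $I\circ X=O$ and $AX-XA=O$ is $X=O$. $A\oplus B$ is the block diagonal direct sum, with vertices of $H_B$ indexed after those of $H_A$. *)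

theory Defs
  imports "Jordan_Normal_Form.Char_Poly"
begin

definition is_graph :: "nat \<Rightarrow> nat set set \<Rightarrow> bool" where
  "is_graph n E \<longleftrightarrow> (\<forall>e\<in>E. \<exists>i j. e = {i, j} \<and> i \<noteq> j \<and> i < n \<and> j < n)"

definition compl_graph :: "nat \<Rightarrow> nat set set \<Rightarrow> nat set set" where
  "compl_graph n E = {{i, j} | i j. i \<noteq> j \<and> i < n \<and> j < n \<and> {i, j} \<notin> E}"

definition sym_real_mat :: "nat \<Rightarrow> real mat \<Rightarrow> bool" where
  "sym_real_mat n A \<longleftrightarrow> A \<in> carrier_mat n n \<and> A\<^sup>T = A"

definition S_pattern :: "nat \<Rightarrow> nat set set \<Rightarrow> real mat set" where
  "S_pattern n G = {A. sym_real_mat n A \<and>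
     (\<forall>i<n. \<forall>j<n. i \<noteq> j \<longrightarrow> (A $$ (i, j) \<noteq> 0 \<longleftrightarrow> {i, j} \<in> G))}"

definition S_cl :: "nat \<Rightarrow> nat set set \<Rightarrow> real mat set" where
  "S_cl n G = {A. sym_real_mat n A \<and>
     (\<forall>i<n. \<forall>j<n. i \<noteq> j \<longrightarrow> A $$ (i, j) \<noteq> 0 \<longrightarrow> {i, j} \<in> G)}"

(* I \<circ> X = O : Hadamard product with the identity is zero, i.e. zero diagonal *)
definition zero_diag :: "nat \<Rightarrow> real mat \<Rightarrow> bool" where
  "zero_diag n X \<longleftrightarrow> (\<forall>i<n. X $$ (i, i) = 0)"

definition SSP_wrt :: "nat \<Rightarrow> real mat \<Rightarrow> nat set set \<Rightarrow> bool" where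
  "SSP_wrt n A H \<longleftrightarrow> (\<forall>X. X \<in> S_cl n (compl_graph n H) \<and> zero_diag n X \<and>
       A * X - X * A = 0\<^sub>m n n \<longrightarrow> X = 0\<^sub>m n n)"

definition graph_dunion :: "nat \<Rightarrow> nat set set \<Rightarrow> nat set set \<Rightarrow> nat set set" where
  "graph_dunion nA HA HB = HA \<union> (\<lambda>e. (\<lambda>i. i + nA) ` e) ` HB"

definition mat_dsum :: "real mat \<Rightarrow> real mat \<Rightarrow> real mat" where
  "mat_dsum A B = four_block_mat A (0\<^sub>m (dim_row A) (dim_col B)) (0\<^sub>m (dim_row B) (dim_col A)) B"

end

theory Submission
  imports Defs "Jordan_Normal_Form.Schur_Decomposition"
begin

text \<open>A matrix X commuting with A \<oplus> B splits into blocks X1, X2, X3, X4. The diagonal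
blocks commute with A and B and inherit the zero pattern and zero diagonal of X, so they
vanish by the strong spectral property of A and B. The off-diagonal blocks solve Sylvester
equations A Y = Y B and B Y' = Y' A. Since a real symmetric matrix has only real
eigenvalues, A is similar over the reals to an upper triangular T, and in T Z = Z B the
lowest nonzero row of Z would be a left eigenvector of B for a diagonal entry of T, i.e.
for an eigenvalue of A. Hence Y = Y' = 0.\<close>

lemma hermitian_form_real_symmetric_cnj:
  fixes A :: "real mat" and v :: "complex vec"
  assumes A: "A \<in> carrier_mat n n" and sym: "A\<^sup>T = A"
  shows "cnj (\<Sum>i<n. \<Sum>j<n. cnj (v $ i) * of_real (A $$ (i, j)) * v $ j)
    = (\<Sum>i<n. \<Sum>j<n. cnj (v $ i) * of_real (A $$ (i, j)) * v $ j)"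
proof -
  have symE: "A $$ (j, i) = A $$ (i, j)" if "i < n" "j < n" for i j
    using sym A that by (metis carrier_matD index_transpose_mat(1))
  have "cnj (\<Sum>i<n. \<Sum>j<n. cnj (v $ i) * of_real (A $$ (i, j)) * v $ j)
      = (\<Sum>i<n. \<Sum>j<n. cnj (v $ j) * of_real (A $$ (j, i)) * v $ i)"
    by (auto simp: ac_simps symE intro!: sum.cong)
  also have "\<dots> = (\<Sum>j<n. \<Sum>i<n. cnj (v $ j) * of_real (A $$ (j, i)) * v $ i)"
    by (rule sum.swap)
  finally show ?thesis by simp
qed

lemma real_symmetric_complex_eigenvalue_real:
  fixes A :: "real mat"
  assumes A: "A \<in> carrier_mat n n" and sym: "A\<^sup>T = A"
    and ev: "eigenvalue (map_mat complex_of_real A) a"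
  shows "Im a = 0"
proof -
  obtain v where v: "v \<in> carrier_vec n" "v \<noteq> 0\<^sub>v n" and Av: "map_mat of_real A *\<^sub>v v = a \<cdot>\<^sub>v v"
    using ev A unfolding eigenvalue_def eigenvector_def by auto
  define q where "q = (\<Sum>i<n. \<Sum>j<n. cnj (v $ i) * of_real (A $$ (i, j)) * v $ j)"
  have row: "(\<Sum>j<n. of_real (A $$ (i, j)) * v $ j) = a * v $ i" if "i < n" for i
  proof -
    have "(map_mat of_real A *\<^sub>v v) $ i = (\<Sum>j<n. of_real (A $$ (i, j)) * v $ j)"
      using that v A by (auto simp: scalar_prod_def lessThan_atLeast0 intro!: sum.cong)
    then show ?thesis using Av that v by simp
  qed
  have "q = (\<Sum>i<n. cnj (v $ i) * (\<Sum>j<n. of_real (A $$ (i, j)) * v $ j))"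
    unfolding q_def by (simp add: sum_distrib_left mult.assoc)
  also have "\<dots> = (\<Sum>i<n. a * (v $ i * cnj (v $ i)))"
    by (intro sum.cong refl) (use row in \<open>auto simp: ac_simps\<close>)
  also have "\<dots> = a * (\<Sum>i<n. of_real ((cmod (v $ i))\<^sup>2))"
    by (simp only: complex_norm_square sum_distrib_left)
  also have "\<dots> = a * of_real (\<Sum>i<n. (cmod (v $ i))\<^sup>2)"
    by simp
  finally have q: "q = a * of_real (\<Sum>i<n. (cmod (v $ i))\<^sup>2)" .
  obtain i where i: "i < n" "v $ i \<noteq> 0"
    using v by (metis eq_vecI carrier_vecD index_zero_vec)
  have "0 < (cmod (v $ i))\<^sup>2" using i by simp
  also have "\<dots> \<le> (\<Sum>i<n. (cmod (v $ i))\<^sup>2)" by (rule member_le_sum) (use i in auto)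
  finally have pos: "0 < (\<Sum>i<n. (cmod (v $ i))\<^sup>2)" .
  have "Im q = 0"
    using hermitian_form_real_symmetric_cnj[OF A sym, of v] unfolding q_def[symmetric]
    by (metis cnj.simps(2) neg_equal_zero)
  then show ?thesis using q pos by simp
qed

lemma char_poly_real_symmetric_splits:
  fixes A :: "real mat"
  assumes A: "A \<in> carrier_mat n n" and sym: "A\<^sup>T = A"
  shows "\<exists>es. char_poly A = (\<Prod>e\<leftarrow>es. [:- e, 1:])"
proof -
  let ?C = "map_mat complex_of_real A"
  have C: "?C \<in> carrier_mat n n" using A by simp
  obtain as where split: "char_poly ?C = (\<Prod>a\<leftarrow>as. [:- a, 1:])"
    using char_poly_factorized[OF C] by blast
  have real: "a = of_real (Re a)" if "a \<in> set as" for a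
  proof -
    have "poly (char_poly ?C) a = 0"
      using that unfolding split poly_prod_list by auto
    then have "eigenvalue ?C a" using eigenvalue_root_char_poly[OF C] by simp
    then show ?thesis using real_symmetric_complex_eigenvalue_real[OF A sym] complex_eq_iff by force
  qed
  interpret of_real_poly: map_poly_inj_comm_ring_hom "of_real :: real \<Rightarrow> complex" ..
  have "map_poly of_real (\<Prod>e\<leftarrow>map Re as. [:- e, 1:]) = (\<Prod>a\<leftarrow>as. [:- a, 1:])"
    using real by (simp add: of_real_poly.hom_prod_list o_def cong: map_cong)
  also have "\<dots> = map_poly of_real (char_poly A)"
    unfolding split[symmetric] by (rule of_real_hom.char_poly_hom[OF A])
  finally show ?thesis by (metis of_real_poly.injectivity)
qed

lemma eigenvalue_transpose_iff:
  fixes A :: "'a::field mat"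
  assumes "A \<in> carrier_mat n n"
  shows "eigenvalue A\<^sup>T k \<longleftrightarrow> eigenvalue A k"
  using assms by (simp add: eigenvalue_root_char_poly[of _ n])

lemma upper_triangular_intertwiner_row_eigen:
  fixes T B Z :: "'a::comm_ring_1 mat"
  assumes T: "T \<in> carrier_mat n n" "upper_triangular T" and B: "B \<in> carrier_mat m m"
    and Z: "Z \<in> carrier_mat n m" and TZ: "T * Z = Z * B" and i: "i < n"
    and below: "\<And>k. i < k \<Longrightarrow> k < n \<Longrightarrow> row Z k = 0\<^sub>v m"
  shows "B\<^sup>T *\<^sub>v row Z i = T $$ (i, i) \<cdot>\<^sub>v row Z i"
proof (rule eq_vecI)
  fix j assume "j < dim_vec (T $$ (i, i) \<cdot>\<^sub>v row Z i)"
  then have j: "j < m" using Z by simp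
  have "(B\<^sup>T *\<^sub>v row Z i) $ j = (Z * B) $$ (i, j)"
    using B Z i j by (simp add: comm_scalar_prod[of _ m])
  also have "\<dots> = (\<Sum>k\<in>{0..<n}. T $$ (i, k) * Z $$ (k, j))"
    using TZ[symmetric] T Z i j by (simp add: scalar_prod_def)
  also have "\<dots> = (\<Sum>k\<in>{0..<n}. if k = i then T $$ (i, i) * Z $$ (i, j) else 0)"
  proof (intro sum.cong refl)
    fix k assume "k \<in> {0..<n}"
    moreover have "Z $$ (k, j) = 0" if "i < k" "k < n"
      using arg_cong[OF below[OF that], of "\<lambda>v. v $ j"] Z j that by simp
    ultimately show "T $$ (i, k) * Z $$ (k, j) = (if k = i then T $$ (i, i) * Z $$ (i, j) else 0)"
      using T i by (cases k i rule: linorder_cases) (auto simp: upper_triangular_def)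
  qed
  also have "\<dots> = (T $$ (i, i) \<cdot>\<^sub>v row Z i) $ j"
    using Z i j by simp
  finally show "(B\<^sup>T *\<^sub>v row Z i) $ j = (T $$ (i, i) \<cdot>\<^sub>v row Z i) $ j" .
qed (use B Z in simp)

lemma upper_triangular_intertwiner_zero:
  fixes T B Z :: "'a::field mat"
  assumes T: "T \<in> carrier_mat n n" "upper_triangular T" and B: "B \<in> carrier_mat m m"
    and Z: "Z \<in> carrier_mat n m" and TZ: "T * Z = Z * B"
    and diag: "\<And>i. i < n \<Longrightarrow> \<not> eigenvalue B (T $$ (i, i))"
  shows "Z = 0\<^sub>m n m"
proof (rule ccontr)
  define R where "R = {i. i < n \<and> row Z i \<noteq> 0\<^sub>v m}"
  assume "Z \<noteq> 0\<^sub>m n m"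
  then have "R \<noteq> {}"
    using Z unfolding R_def by (auto simp: row_def vec_eq_iff)
  moreover have "finite R" unfolding R_def by simp
  ultimately obtain i where i: "i < n" "row Z i \<noteq> 0\<^sub>v m"
    and below: "\<And>k. i < k \<Longrightarrow> k < n \<Longrightarrow> row Z k = 0\<^sub>v m"
    unfolding R_def by (metis (mono_tags, lifting) Max_ge Max_in mem_Collect_eq not_le)
  have "B\<^sup>T *\<^sub>v row Z i = T $$ (i, i) \<cdot>\<^sub>v row Z i"
    by (rule upper_triangular_intertwiner_row_eigen[OF T B Z TZ i(1) below])
  moreover have "row Z i \<in> carrier_vec m" using Z by auto
  ultimately have "eigenvector B\<^sup>T (row Z i) (T $$ (i, i))"
    using i(2) unfolding eigenvector_def index_transpose_mat carrier_matD[OF B] by blast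
  then have "eigenvalue B\<^sup>T (T $$ (i, i))"
    unfolding eigenvalue_def by blast
  then have "eigenvalue B (T $$ (i, i))"
    by (simp only: eigenvalue_transpose_iff[OF B])
  then show False using diag i(1) by blast
qed

lemma split_char_poly_intertwiner_zero:
  fixes A B Y :: "'a::conjugatable_ordered_field mat"
  assumes A: "A \<in> carrier_mat n n" and split: "char_poly A = (\<Prod>e\<leftarrow>es. [:- e, 1:])"
    and B: "B \<in> carrier_mat m m" and Y: "Y \<in> carrier_mat n m" and AY: "A * Y = Y * B"
    and disjoint: "\<not> (\<exists>t. eigenvalue A t \<and> eigenvalue B t)"
  shows "Y = 0\<^sub>m n m"
proof -
  obtain T P Q where "schur_decomposition A es = (T, P, Q)"
    by (cases "schur_decomposition A es")
  from schur_decomposition[OF A split this]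
  have sim: "similar_mat_wit A T P Q" and T: "upper_triangular T" and diag: "diag_mat T = es"
    by auto
  note PTQ = similar_mat_witD2[OF A sim]
  have "Q * A = Q * (P * T * Q)" using PTQ(3) by simp
  also have "\<dots> = (Q * P) * T * Q"
    using PTQ(5-7) by (simp add: assoc_mult_mat[of _ n n _ n])
  also have "\<dots> = T * Q" using PTQ(2,5,7) by simp
  finally have QA: "Q * A = T * Q" .
  have "T * (Q * Y) = (T * Q) * Y" using PTQ(5,7) Y by simp
  also have "\<dots> = Q * (A * Y)" using QA[symmetric] PTQ(7) A Y by simp
  also have "\<dots> = (Q * Y) * B" using AY PTQ(7) Y B by simp
  finally have TQY: "T * (Q * Y) = (Q * Y) * B" .
  have diag_not_eigenvalue: "\<not> eigenvalue B (T $$ (i, i))" if "i < n" for i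
  proof -
    have "T $$ (i, i) \<in> set es"
      using that PTQ(5) unfolding diag[symmetric] diag_mat_def by auto
    then have "eigenvalue A (T $$ (i, i))"
      using A by (auto simp: eigenvalue_root_char_poly split poly_prod_list)
    then show ?thesis using disjoint by blast
  qed
  have QY: "Q * Y = 0\<^sub>m n m"
    using upper_triangular_intertwiner_zero[OF PTQ(5) T B _ TQY diag_not_eigenvalue] PTQ(7) Y
    by simp
  have "Y = (P * Q) * Y" using PTQ(1) Y by simp
  also have "\<dots> = P * (Q * Y)" using PTQ(6,7) Y by simp
  finally show ?thesis using QY PTQ(6) by simp
qed

lemma real_symmetric_intertwiner_zero:
  assumes A: "sym_real_mat n A" and B: "B \<in> carrier_mat m m" and Y: "Y \<in> carrier_mat n m"
    and AY: "A * Y = Y * B" and disjoint: "\<not> (\<exists>t. eigenvalue A t \<and> eigenvalue B t)"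
  shows "Y = 0\<^sub>m n m"
proof -
  have A': "A \<in> carrier_mat n n" "A\<^sup>T = A" using A unfolding sym_real_mat_def by auto
  obtain es where "char_poly A = (\<Prod>e\<leftarrow>es. [:- e, 1:])"
    using char_poly_real_symmetric_splits[OF A'] by blast
  from split_char_poly_intertwiner_zero[OF A'(1) this B Y AY disjoint] show ?thesis .
qed

lemma minus_mat_eq_0_imp_eq:
  fixes M N :: "'a::ab_group_add mat"
  assumes "M \<in> carrier_mat nr nc" "N \<in> carrier_mat nr nc" "M - N = 0\<^sub>m nr nc"
  shows "M = N"
proof (rule eq_matI)
  fix i j assume "i < dim_row N" "j < dim_col N"
  then show "M $$ (i, j) = N $$ (i, j)"
    using arg_cong[OF assms(3), of "\<lambda>K. K $$ (i, j)"] assms(1,2) by simp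
qed (use assms in auto)

lemma split_block_four_block_mat:
  assumes "A1 \<in> carrier_mat nr1 nc1" "A2 \<in> carrier_mat nr1 nc2"
    and "A3 \<in> carrier_mat nr2 nc1" "A4 \<in> carrier_mat nr2 nc2"
  shows "split_block (four_block_mat A1 A2 A3 A4) nr1 nc1 = (A1, A2, A3, A4)"
  using assms unfolding split_block_def Let_def by auto

lemma mat_dsum_carrier:
  assumes "A \<in> carrier_mat nA nA" "B \<in> carrier_mat nB nB"
  shows "mat_dsum A B \<in> carrier_mat (nA + nB) (nA + nB)"
  using assms unfolding mat_dsum_def by auto

lemma mat_dsum_commutant_blocks:
  assumes A: "A \<in> carrier_mat nA nA" and B: "B \<in> carrier_mat nB nB"
    and X: "X \<in> carrier_mat (nA + nB) (nA + nB)" and split: "split_block X nA nA = (X1, X2, X3, X4)"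
    and comm: "mat_dsum A B * X = X * mat_dsum A B"
  shows "A * X1 = X1 * A" "A * X2 = X2 * B" "B * X3 = X3 * A" "B * X4 = X4 * B"
proof -
  note blocks = split_block[OF split carrier_matD[OF X]]
  have "mat_dsum A B * X = four_block_mat (A * X1) (A * X2) (B * X3) (B * X4)"
    unfolding mat_dsum_def using A B blocks
    by (simp add: mult_four_block_mat[OF A zero_carrier_mat zero_carrier_mat B blocks(1-4)])
  moreover have "X * mat_dsum A B = four_block_mat (X1 * A) (X2 * B) (X3 * A) (X4 * B)"
    unfolding mat_dsum_def using A B blocks
    by (simp add: mult_four_block_mat[OF blocks(1-4) A zero_carrier_mat zero_carrier_mat B])
  ultimately have "split_block (four_block_mat (A * X1) (A * X2) (B * X3) (B * X4)) nA nA
      = split_block (four_block_mat (X1 * A) (X2 * B) (X3 * A) (X4 * B)) nA nA"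
    using comm by simp
  then have "(A * X1, A * X2, B * X3, B * X4) = (X1 * A, X2 * B, X3 * A, X4 * B)"
    using A B blocks by (simp add: split_block_four_block_mat[of _ nA nA _ nB _ nB])
  then show "A * X1 = X1 * A" "A * X2 = X2 * B" "B * X3 = X3 * A" "B * X4 = X4 * B"
    by simp_all
qed

lemma S_cl_compl_principal_block:
  assumes X: "X \<in> S_cl N (compl_graph N H)" and le: "s + n \<le> N"
    and shift: "\<And>e. e \<in> H' \<Longrightarrow> (\<lambda>i. i + s) ` e \<in> H"
  shows "mat n n (\<lambda>(i, j). X $$ (i + s, j + s)) \<in> S_cl n (compl_graph n H')"
proof -
  have "X \<in> carrier_mat N N" and "X\<^sup>T = X"
    using X unfolding S_cl_def sym_real_mat_def by auto
  then have sym: "X $$ (j, i) = X $$ (i, j)" if "i < N" "j < N" for i j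
    using that by (metis carrier_matD index_transpose_mat(1))
  have support: "{i, j} \<in> compl_graph n H'"
    if "i < n" "j < n" "i \<noteq> j" "X $$ (i + s, j + s) \<noteq> 0" for i j
  proof -
    have "{i + s, j + s} \<in> compl_graph N H"
      using X that le unfolding S_cl_def by auto
    then have "(\<lambda>i. i + s) ` {i, j} \<notin> H"
      unfolding compl_graph_def by auto
    then have "{i, j} \<notin> H'" using shift by blast
    then show ?thesis unfolding compl_graph_def using that by blast
  qed
  show ?thesis
    unfolding S_cl_def sym_real_mat_def using sym support le by auto
qed

lemma SSP_wrt_principal_block_zero:
  assumes SSP: "SSP_wrt n M H'" and M: "M \<in> carrier_mat n n"
    and X: "X \<in> S_cl N (compl_graph N H)" "zero_diag N X" and le: "s + n \<le> N"
    and shift: "\<And>e. e \<in> H' \<Longrightarrow> (\<lambda>i. i + s) ` e \<in> H"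
    and Y: "Y = mat n n (\<lambda>(i, j). X $$ (i + s, j + s))" and comm: "M * Y = Y * M"
  shows "Y = 0\<^sub>m n n"
proof -
  have S_cl: "Y \<in> S_cl n (compl_graph n H')"
    unfolding Y by (rule S_cl_compl_principal_block[OF X(1) le shift])
  have diag: "zero_diag n Y"
    using X(2) le unfolding Y zero_diag_def by auto
  have "Y \<in> carrier_mat n n" unfolding Y by simp
  then have "M * Y - Y * M = 0\<^sub>m n n"
    using comm M by simp
  with SSP S_cl diag show ?thesis
    unfolding SSP_wrt_def by blast
qed

theorem proposition3p5:
  fixes nA nB :: nat and A B :: "real mat" and GA HA GB HB :: "nat set set"
  assumes "is_graph nA GA" and "is_graph nA HA" and "GA \<subseteq> HA"
    and "is_graph nB GB" and "is_graph nB HB" and "GB \<subseteq> HB"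
    and "A \<in> S_pattern nA GA" and "B \<in> S_pattern nB GB"
    and "SSP_wrt nA A HA" and "SSP_wrt nB B HB"
    and "\<not> (\<exists>t. eigenvalue A t \<and> eigenvalue B t)"
  shows "SSP_wrt (nA + nB) (mat_dsum A B) (graph_dunion nA HA HB)"
  unfolding SSP_wrt_def
proof (intro allI impI, elim conjE)
  fix X
  assume XS: "X \<in> S_cl (nA + nB) (compl_graph (nA + nB) (graph_dunion nA HA HB))"
    and zd: "zero_diag (nA + nB) X"
    and comm: "mat_dsum A B * X - X * mat_dsum A B = 0\<^sub>m (nA + nB) (nA + nB)"
  have A: "sym_real_mat nA A" and B: "sym_real_mat nB B"
    using assms(7,8) unfolding S_pattern_def by auto
  then have Ac: "A \<in> carrier_mat nA nA" and Bc: "B \<in> carrier_mat nB nB"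
    and X: "X \<in> carrier_mat (nA + nB) (nA + nB)"
    using XS unfolding sym_real_mat_def S_cl_def by auto
  obtain X1 X2 X3 X4 where split: "split_block X nA nA = (X1, X2, X3, X4)"
    by (metis prod_cases4)
  note blocks = split_block[OF split carrier_matD[OF X]]
  have "mat_dsum A B * X = X * mat_dsum A B"
    using minus_mat_eq_0_imp_eq[OF _ _ comm] mat_dsum_carrier[OF Ac Bc] X by auto
  note c = mat_dsum_commutant_blocks[OF Ac Bc X split this]
  have X1: "X1 = mat nA nA (\<lambda>(i, j). X $$ (i + 0, j + 0))"
    and X4: "X4 = mat nB nB (\<lambda>(i, j). X $$ (i + nA, j + nA))"
    using split X unfolding split_block_def Let_def by auto
  have "X1 = 0\<^sub>m nA nA"
    by (rule SSP_wrt_principal_block_zero[OF assms(9) Ac XS zd _ _ X1 c(1)])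
      (auto simp: graph_dunion_def)
  moreover have "X4 = 0\<^sub>m nB nB"
    by (rule SSP_wrt_principal_block_zero[OF assms(10) Bc XS zd _ _ X4 c(4)])
      (auto simp: graph_dunion_def)
  moreover have "X2 = 0\<^sub>m nA nB"
    using real_symmetric_intertwiner_zero[OF A Bc _ c(2) assms(11)] blocks X by auto
  moreover have "X3 = 0\<^sub>m nB nA"
    using real_symmetric_intertwiner_zero[OF B Ac _ c(3)] assms(11) blocks X by auto
  ultimately show "X = 0\<^sub>m (nA + nB) (nA + nB)"
    using blocks X by simp
qed

end
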